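(* Consider an exponential bottleneck game on a graph $G$, a Nash-routing $\mathbf{p}=[p_1,\dots,p_N]$ and a routing $\mathbf{p}^*=[p_1^*,\dots,p_N^*]$ of minimum social cost, and suppose $C^*=C(\mathbf{p}^* )=1$ and $L^*\ge2$. Let $\hat C=\lceil\max_i\log_2\widetilde C_i(\mathbf{p})\rceil$, $l_1^*=\log_2(L^*-1)$ and $k=\hat C-l_1^*-11$. Then every non-empty set of players $S\subseteq S^{(1)}\cup S^{(2)}\cup\dots\cup S^{(k)}$ is not self-sufficient in $\mathbf{p}$.
   Context: Player $\pi_i$ has a strategy set $\mathcal{P}_i$ of paths from $u_i$ to $v_i$; a routing is $\mathbf{p}=[p_1,\dots,p_N]$ with $p_i\in\mathcal{P}_i$. $C_e(\mathbf{p})$ is the number of paths in $\mathbf{p}$ using edge $e$; social cost $C(\mathbf{p})=\max_eC_e(\mathbf{p})$; player cost $\widetilde C_i(\mathbf{p})=\sum_{e\in p_i}2^{C_e(\mathbf{p})}$. A Nash-routing is one in which no player can strictly lower its cost by unilaterally switching to another path in its strategy set. $L^*$ is the maximum length of a path in $\mathbf{p}^*$. Stage $i$ ($1\le i\le\hat C$): $S^{(i)}$ is the set of players $\pi_j$ with $2^{\hat C-i}+2\le\widetilde C_j(\mathbf{p})\le 2^{\hat C-i+1}$. Self-sufficiency: for a set $S$ of players and $\pi_j\in S$, let $\mathbf{q}_j$ be the routing consisting only of the players in $S$, where every player of $S$ other than $\pi_j$ uses its path from $\mathbf{p}$ and $\pi_j$ uses $p_j^*$ (congestions in $\mathbf{q}_j$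 count only these paths). $S$ is self-sufficient in $\mathbf{p}$ if for every $\pi_j\in S$, $\sum_{e\in p_j^*}2^{C_e(\mathbf{q}_j)}\ge\widetilde C_j(\mathbf{p})$. *)

theory Defs
  imports Complex_Main
begin

(* An undirected graph is given by a finite set E of edges, each edge a 2-element vertex set.
   A path is a list of distinct vertices, consecutive vertices joined by an edge of E. *)

definition pedges :: "'v list \<Rightarrow> 'v set set" where
  "pedges xs = {{xs ! i, xs ! Suc i} | i. Suc i < length xs}"

definition plen :: "'v list \<Rightarrow> nat" where
  "plen xs = length xs - 1"

definition is_path :: "'v set set \<Rightarrow> 'v \<Rightarrow> 'v \<Rightarrow> 'v list \<Rightarrow> bool" where
  "is_path E u v xs \<longleftrightarrow> xs \<noteq> [] \<and> hd xs = u \<and> last xs = v \<and> distinct xs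
     \<and> (\<forall>i. Suc i < length xs \<longrightarrow> {xs ! i, xs ! Suc i} \<in> E)"

definition cong :: "(nat \<Rightarrow> 'v list) \<Rightarrow> nat set \<Rightarrow> 'v set \<Rightarrow> nat" where
  "cong r A e = card {i \<in> A. e \<in> pedges (r i)}"

definition social_cost :: "'v set set \<Rightarrow> nat \<Rightarrow> (nat \<Rightarrow> 'v list) \<Rightarrow> nat" where
  "social_cost E N r = Max (insert 0 ((\<lambda>e. cong r {..<N} e) ` E))"

definition player_cost :: "nat \<Rightarrow> (nat \<Rightarrow> 'v list) \<Rightarrow> nat \<Rightarrow> nat" where
  "player_cost N r i = (\<Sum>e\<in>pedges (r i). 2 ^ cong r {..<N} e)"

definition routing :: "nat \<Rightarrow> (nat \<Rightarrow> 'v list set) \<Rightarrow> (nat \<Rightarrow> 'v list) \<Rightarrow> bool" where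
  "routing N P r \<longleftrightarrow> (\<forall>i<N. r i \<in> P i)"

definition nash_routing :: "nat \<Rightarrow> (nat \<Rightarrow> 'v list set) \<Rightarrow> (nat \<Rightarrow> 'v list) \<Rightarrow> bool" where
  "nash_routing N P r \<longleftrightarrow> routing N P r \<and>
     (\<forall>i<N. \<forall>q\<in>P i. player_cost N r i \<le> player_cost N (r(i := q)) i)"

definition optimal_routing ::
  "'v set set \<Rightarrow> nat \<Rightarrow> (nat \<Rightarrow> 'v list set) \<Rightarrow> (nat \<Rightarrow> 'v list) \<Rightarrow> bool" where
  "optimal_routing E N P r \<longleftrightarrow> routing N P r \<and>
     (\<forall>r'. routing N P r' \<longrightarrow> social_cost E N r \<le> social_cost E N r')"

definition max_len :: "nat \<Rightarrow> (nat \<Rightarrow> 'v list) \<Rightarrow> nat" where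
  "max_len N r = Max ((\<lambda>i. plen (r i)) ` {..<N})"

definition C_hat :: "nat \<Rightarrow> (nat \<Rightarrow> 'v list) \<Rightarrow> int" where
  "C_hat N p = \<lceil>Max ((\<lambda>i. log 2 (real (player_cost N p i))) ` {..<N})\<rceil>"

definition stage :: "nat \<Rightarrow> (nat \<Rightarrow> 'v list) \<Rightarrow> nat \<Rightarrow> nat set" where
  "stage N p i = {j. j < N \<and> 1 \<le> int i \<and> int i \<le> C_hat N p \<and>
      2 ^ nat (C_hat N p - int i) + 2 \<le> player_cost N p j \<and>
      player_cost N p j \<le> 2 ^ nat (C_hat N p - int i + 1)}"

definition self_sufficient ::
  "nat \<Rightarrow> (nat \<Rightarrow> 'v list) \<Rightarrow> (nat \<Rightarrow> 'v list) \<Rightarrow> nat set \<Rightarrow> bool" where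
  "self_sufficient N p pstar S \<longleftrightarrow>
     (\<forall>j\<in>S. (\<Sum>e\<in>pedges (pstar j). (2::nat) ^ cong (p(j := pstar j)) S e) \<ge> player_cost N p j)"

end

theory Submission
  imports Defs "HOL-Library.Disjoint_Sets"
begin

text \<open>Write \<open>c e\<close> for the congestion of edge \<open>e\<close> caused by \<open>S\<close> alone in \<open>p\<close>, and \<open>D\<close> for the
  edges of the optimal paths of \<open>S\<close>. Since \<open>C\<^sup>* = 1\<close> these paths are edge-disjoint, so
  summing the self-sufficiency inequalities gives \<open>\<Sum>\<^sub>j C\<^sub>j(p) \<le> \<Sum>\<^sub>e\<^sub>\<in>\<^sub>D 2\<^bsup>c e + 1\<^esup>\<close>, while
  double counting gives \<open>\<Sum>\<^sub>e c e 2\<^bsup>c e\<^esup> \<le> \<Sum>\<^sub>j C\<^sub>j(p)\<close>. As \<open>9 \<cdot> 2\<^bsup>c+1\<^esup> \<le> 2c 2\<^bsup>c\<^esup> + 4608\<close>,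
  this forces \<open>7 \<Sum>\<^sub>j C\<^sub>j(p) \<le> 4608 |D| \<le> 4608 |S| L\<^sup>*\<close>. But every player of the first \<open>k\<close> stages
  has cost more than \<open>2\<^bsup>11\<^esup>(L\<^sup>* - 1)\<close>, which is too large.\<close>

lemma pedges_eq_image: "pedges xs = (\<lambda>i. {xs!i, xs!Suc i}) ` {..<length xs - 1}"
  unfolding pedges_def by auto

lemma finite_pedges [simp]: "finite (pedges xs)"
  by (simp add: pedges_eq_image)

lemma card_pedges_le_plen: "card (pedges xs) \<le> plen xs"
  unfolding pedges_eq_image plen_def using card_image_le[of "{..<length xs - 1}"] by simp

lemma pedges_subset_if_is_path: "is_path E u v xs \<Longrightarrow> pedges xs \<subseteq> E"
  unfolding is_path_def pedges_def by auto

lemma pedges_subset_if_routing: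
  assumes "routing N P r" and "\<forall>i<N. \<forall>q\<in>P i. is_path E (u i) (v i) q" and "i < N"
  shows "pedges (r i) \<subseteq> E"
  using assms by (intro pedges_subset_if_is_path[of E "u i" "v i"]) (auto simp: routing_def)

lemma card_UN_pedges_le_max_len:
  assumes "S \<subseteq> {..<N}"
  shows "card (\<Union>j\<in>S. pedges (r j)) \<le> card S * max_len N r"
proof -
  have "finite S" using assms finite_subset by blast
  have "card (pedges (r j)) \<le> max_len N r" if "j \<in> S" for j
  proof -
    have "plen (r j) \<le> max_len N r"
      unfolding max_len_def using that assms by (intro Max_ge) auto
    then show ?thesis using card_pedges_le_plen le_trans by blast
  qed
  then have "(\<Sum>j\<in>S. card (pedges (r j))) \<le> (\<Sum>j\<in>S. max_len N r)"
    by (rule sum_mono)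
  then show ?thesis
    using card_UN_le[OF \<open>finite S\<close>, of "\<lambda>j. pedges (r j)"] by simp
qed

lemma cong_mono: "finite B \<Longrightarrow> A \<subseteq> B \<Longrightarrow> cong r A e \<le> cong r B e"
  unfolding cong_def by (intro card_mono) auto

lemma cong_fun_upd_le: "finite S \<Longrightarrow> cong (r(j := q)) S e \<le> cong r S e + 1"
proof -
  assume "finite S"
  have "{i\<in>S. e \<in> pedges ((r(j := q)) i)} \<subseteq> insert j {i\<in>S. e \<in> pedges (r i)}" by auto
  then have "cong (r(j := q)) S e \<le> card (insert j {i\<in>S. e \<in> pedges (r i)})"
    unfolding cong_def using \<open>finite S\<close> by (intro card_mono) auto
  also have "\<dots> \<le> cong r S e + 1"
    unfolding cong_def using \<open>finite S\<close> by (simp add: card_insert_if)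
  finally show ?thesis .
qed

lemma cong_eq_0_if_unused: "e \<notin> (\<Union>j\<in>S. pedges (r j)) \<Longrightarrow> cong r S e = 0"
  unfolding cong_def by (metis (mono_tags, lifting) UN_I card.empty empty_Collect_eq)

lemma sum_pedges_eq_sum_cong:
  assumes "finite S"
  shows "(\<Sum>j\<in>S. \<Sum>e\<in>pedges (r j). f (cong r S e))
           = (\<Sum>e\<in>(\<Union>j\<in>S. pedges (r j)). cong r S e * f (cong r S e))"
proof -
  let ?U = "\<Union>j\<in>S. pedges (r j)"
  have "(\<Sum>j\<in>S. \<Sum>e\<in>pedges (r j). f (cong r S e))
          = (\<Sum>j\<in>S. \<Sum>e\<in>{e\<in>?U. e \<in> pedges (r j)}. f (cong r S e))"
    by (rule sum.cong) (auto intro: sum.cong)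
  also have "\<dots> = (\<Sum>e\<in>?U. \<Sum>j\<in>{j\<in>S. e \<in> pedges (r j)}. f (cong r S e))"
    using assms by (intro sum.swap_restrict) auto
  also have "\<dots> = (\<Sum>e\<in>?U. cong r S e * f (cong r S e))"
    by (simp add: cong_def)
  finally show ?thesis .
qed

lemma disjoint_family_if_social_cost_le_1:
  assumes "finite E" and "\<forall>i<N. pedges (r i) \<subseteq> E" and "social_cost E N r \<le> 1"
  shows "disjoint_family_on (\<lambda>i. pedges (r i)) {..<N}"
  unfolding disjoint_family_on_def
proof (intro ballI impI, rule ccontr)
  fix i j assume ij: "i \<in> {..<N}" "j \<in> {..<N}" "i \<noteq> j"
    and "pedges (r i) \<inter> pedges (r j) \<noteq> {}"
  then obtain e where e: "e \<in> pedges (r i)" "e \<in> pedges (r j)" by blast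
  with ij assms(2) have "e \<in> E" by auto
  have "card {i, j} \<le> cong r {..<N} e"
    unfolding cong_def using e ij by (intro card_mono) auto
  also have "\<dots> \<le> social_cost E N r"
    unfolding social_cost_def using \<open>e \<in> E\<close> assms(1) by (intro Max_ge) auto
  finally show False using assms(3) ij by simp
qed

lemma sum_cong_pow_le_sum_player_cost:
  assumes "S \<subseteq> {..<N}"
  shows "(\<Sum>e\<in>(\<Union>j\<in>S. pedges (p j)). cong p S e * 2 ^ cong p S e)
           \<le> (\<Sum>j\<in>S. player_cost N p j)"
proof -
  have "finite S" using assms finite_subset by blast
  have "(\<Sum>e\<in>(\<Union>j\<in>S. pedges (p j)). cong p S e * 2 ^ cong p S e)
          = (\<Sum>j\<in>S. \<Sum>e\<in>pedges (p j). (2::nat) ^ cong p S e)"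
    using sum_pedges_eq_sum_cong[OF \<open>finite S\<close>, where r = p and f = "\<lambda>c. 2 ^ c"] by simp
  also have "\<dots> \<le> (\<Sum>j\<in>S. player_cost N p j)"
    unfolding player_cost_def
    using cong_mono[OF _ assms] by (intro sum_mono power_increasing) auto
  finally show ?thesis .
qed

lemma sum_player_cost_le_if_self_sufficient:
  assumes "self_sufficient N p q S" and "finite S"
    and "disjoint_family_on (\<lambda>j. pedges (q j)) S"
  shows "(\<Sum>j\<in>S. player_cost N p j) \<le> (\<Sum>e\<in>(\<Union>j\<in>S. pedges (q j)). 2 ^ (cong p S e + 1))"
proof -
  have "(\<Sum>j\<in>S. player_cost N p j)
          \<le> (\<Sum>j\<in>S. \<Sum>e\<in>pedges (q j). (2::nat) ^ cong (p(j := q j)) S e)"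
    using assms(1) unfolding self_sufficient_def by (intro sum_mono) blast
  also have "\<dots> \<le> (\<Sum>j\<in>S. \<Sum>e\<in>pedges (q j). 2 ^ (cong p S e + 1))"
    using cong_fun_upd_le[OF assms(2)] by (intro sum_mono power_increasing) auto
  also have "\<dots> = (\<Sum>e\<in>(\<Union>j\<in>S. pedges (q j)). 2 ^ (cong p S e + 1))"
    using assms(2,3) by (simp add: sum.UNION_disjoint_family)
  finally show ?thesis .
qed

lemma nine_pow_Suc_le: "9 * 2 ^ (c + 1) \<le> 2 * c * 2 ^ c + (4608::nat)"
proof (cases "c \<ge> 9")
  case True
  then have "18 * 2 ^ c \<le> 2 * c * (2::nat) ^ c" by (intro mult_right_mono) auto
  moreover have "9 * 2 ^ (c + 1) = 18 * (2::nat) ^ c" by simp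
  ultimately show ?thesis by linarith
next
  case False
  then have "(2::nat) ^ c \<le> 2 ^ 8" by (intro power_increasing) auto
  then show ?thesis by simp
qed

lemma sum_player_cost_bound_if_self_sufficient:
  assumes "self_sufficient N p q S" and "S \<subseteq> {..<N}"
    and "disjoint_family_on (\<lambda>j. pedges (q j)) S"
  shows "7 * (\<Sum>j\<in>S. player_cost N p j) \<le> 4608 * card (\<Union>j\<in>S. pedges (q j))"
proof -
  define c where "c e = cong p S e" for e
  define D where "D = (\<Union>j\<in>S. pedges (q j))"
  define U where "U = (\<Union>j\<in>S. pedges (p j))"
  have "finite S" using assms(2) finite_subset by blast
  then have "finite D" "finite U" unfolding D_def U_def by auto
  have "9 * (\<Sum>j\<in>S. player_cost N p j) \<le> 9 * (\<Sum>e\<in>D. 2 ^ (c e + 1))"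
    using sum_player_cost_le_if_self_sufficient[OF assms(1) \<open>finite S\<close> assms(3)]
    unfolding c_def D_def by simp
  also have "\<dots> = (\<Sum>e\<in>D. 9 * 2 ^ (c e + 1))"
    by (simp add: sum_distrib_left)
  also have "\<dots> \<le> (\<Sum>e\<in>D. 2 * (c e * 2 ^ c e) + 4608)"
    using nine_pow_Suc_le by (intro sum_mono) (simp add: mult.assoc)
  also have "\<dots> = 2 * (\<Sum>e\<in>D. c e * 2 ^ c e) + 4608 * card D"
    by (simp add: sum.distrib sum_distrib_left)
  also have "(\<Sum>e\<in>D. c e * 2 ^ c e) \<le> (\<Sum>e\<in>D \<union> U. c e * 2 ^ c e)"
    using \<open>finite D\<close> \<open>finite U\<close> by (intro sum_mono2) auto
  also have "\<dots> = (\<Sum>e\<in>U. c e * 2 ^ c e)"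
    using \<open>finite D\<close> \<open>finite U\<close> cong_eq_0_if_unused[where S = S and r = p]
    by (intro sum.mono_neutral_right) (auto simp: c_def U_def)
  also have "\<dots> \<le> (\<Sum>j\<in>S. player_cost N p j)"
    unfolding c_def U_def by (rule sum_cong_pow_le_sum_player_cost[OF assms(2)])
  finally show ?thesis unfolding D_def by simp
qed

lemma two_pow_ge_if_log_le:
  assumes "m \<ge> 1" and "log 2 (real m) + 11 \<le> real_of_int x"
  shows "2048 * m \<le> (2::nat) ^ nat x"
proof -
  have "real (2048 * m) = 2 powr (log 2 (real m) + 11)"
    using assms(1) by (simp add: powr_add)
  also have "\<dots> \<le> 2 powr (real (nat x))"
    using assms(2) by (intro powr_mono) auto
  also have "\<dots> = real ((2::nat) ^ nat x)" by (simp add: powr_realpow)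
  finally show ?thesis by linarith
qed

lemma player_cost_ge_if_early_stage:
  assumes "j \<in> stage N p i" and "m \<ge> 1"
    and "real i \<le> real_of_int (C_hat N p) - log 2 (real m) - 11"
  shows "2048 * m + 2 \<le> player_cost N p j"
proof -
  have "2048 * m \<le> (2::nat) ^ nat (C_hat N p - int i)"
    using assms(2,3) by (intro two_pow_ge_if_log_le) auto
  with assms(1) show ?thesis unfolding stage_def by simp
qed

lemma sum_player_cost_ge_if_early_stages:
  assumes "m \<ge> 1"
    and "S \<subseteq> (\<Union>i\<in>{i. 1 \<le> i \<and> real i \<le>
            real_of_int (C_hat N p) - log 2 (real m) - 11}. stage N p i)"
  shows "card S * (2048 * m + 2) \<le> (\<Sum>j\<in>S. player_cost N p j)"
proof -
  have "2048 * m + 2 \<le> player_cost N p j" if j: "j \<in> S" for j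
  proof -
    obtain i where "j \<in> stage N p i"
      and "real i \<le> real_of_int (C_hat N p) - log 2 (real m) - 11"
      using assms(2) j by blast
    then show ?thesis using assms(1) by (intro player_cost_ge_if_early_stage)
  qed
  then show ?thesis
    using sum_bounded_below[of S "2048 * m + 2" "player_cost N p"] by simp
qed

lemma cost_bounds_incompatible:
  fixes s m :: nat
  assumes "s \<ge> 1" and "m \<ge> 1"
  shows "4608 * (s * (m + 1)) < 7 * (s * (2048 * m + 2))"
proof -
  have "s \<le> s * m" using assms(2) by simp
  then show ?thesis using assms(1) by (simp add: algebra_simps)
qed

theorem theorem2:
  fixes E :: "'v set set" and N :: nat and u v :: "nat \<Rightarrow> 'v"
    and P :: "nat \<Rightarrow> 'v list set" and p pstar :: "nat \<Rightarrow> 'v list" and S :: "nat set"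
  assumes "finite E" and "\<forall>e\<in>E. card e = 2"
    and "0 < N"
    and "\<forall>i<N. P i \<noteq> {} \<and> (\<forall>q\<in>P i. is_path E (u i) (v i) q)"
    and "nash_routing N P p"
    and "optimal_routing E N P pstar"
    and "social_cost E N pstar = 1"
    and "max_len N pstar \<ge> 2"
    and "S \<noteq> {}"
    and "S \<subseteq> (\<Union>i\<in>{i. 1 \<le> i \<and> real i \<le>
            real_of_int (C_hat N p) - log 2 (real (max_len N pstar - 1)) - 11}. stage N p i)"
  shows "\<not> self_sufficient N p pstar S"
proof
  assume ss: "self_sufficient N p pstar S"
  define L where "L = max_len N pstar"
  have "S \<subseteq> {..<N}" using assms(10) by (auto simp: stage_def)
  have "routing N P pstar" using assms(6) by (simp add: optimal_routing_def)
  moreover have "\<forall>i<N. \<forall>q\<in>P i. is_path E (u i) (v i) q" using assms(4) by blast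
  ultimately have "\<forall>i<N. pedges (pstar i) \<subseteq> E" using pedges_subset_if_routing by blast
  then have "disjoint_family_on (\<lambda>j. pedges (pstar j)) {..<N}"
    using assms(7) by (intro disjoint_family_if_social_cost_le_1[OF assms(1)]) auto
  then have "disjoint_family_on (\<lambda>j. pedges (pstar j)) S"
    by (rule disjoint_family_on_mono[OF \<open>S \<subseteq> {..<N}\<close>])
  then have "7 * (\<Sum>j\<in>S. player_cost N p j) \<le> 4608 * card (\<Union>j\<in>S. pedges (pstar j))"
    by (rule sum_player_cost_bound_if_self_sufficient[OF ss \<open>S \<subseteq> {..<N}\<close>])
  moreover have "card (\<Union>j\<in>S. pedges (pstar j)) \<le> card S * L"
    unfolding L_def by (rule card_UN_pedges_le_max_len[OF \<open>S \<subseteq> {..<N}\<close>])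
  moreover have "card S * (2048 * (L - 1) + 2) \<le> (\<Sum>j\<in>S. player_cost N p j)"
    using assms(8,10) unfolding L_def by (intro sum_player_cost_ge_if_early_stages) auto
  moreover have "card S \<ge> 1"
    using \<open>S \<subseteq> {..<N}\<close> assms(9) finite_subset by (auto simp: Suc_le_eq card_gt_0_iff)
  then have "4608 * (card S * L) < 7 * (card S * (2048 * (L - 1) + 2))"
    using cost_bounds_incompatible[of "card S" "L - 1"] assms(8) unfolding L_def by simp
  ultimately show False by linarith
qed

end
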